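(* Let $\lambda\vdash n$ be a partition and let $\mathbf{x}=(x_i)_{i\in\mathbb{Z}}$ be commuting indeterminates. Then, as an identity of rational functions in $\mathbf{x}$, \[\sum_{T}T_{\mathbf{x}}=\prod_{(i,j)\in\lambda}\frac{1}{h_\lambda(i,j;\mathbf{x})},\] where the sum is over all standard Young tableaux $T$ of shape $\lambda$.
   Context: Partitions are drawn in English notation with matrix coordinates: the box in row $i$ and column $j$ is $(i,j)$. The hook $H_\lambda(i,j)$ is the set of boxes $(i,j')\in\lambda$ with $j'\ge j$ together with the boxes $(i',j)\in\lambda$ with $i'\ge i$, and the $\mathbf{x}$-hook-length is $h_\lambda(i,j;\mathbf{x})=\sum_{(i',j')\in H_\lambda(i,j)}x_{j'-i'}$. For a standard Young tableau $T$ of shape $\lambda\vdash n$ and $k\in[n]$, let $(i_T(k),j_T(k))$ be the box containing $k$, and define \[T_{\mathbf{x}}=\prod_{k=1}^{n}\frac{1}{\sum_{l=1}^{k}x_{j_T(n+1-l)-i_T(n+1-l)}}.\] *)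

theory Defs
  imports Main
begin

definition is_partition :: "nat list \<Rightarrow> nat \<Rightarrow> bool" where
  "is_partition lam n \<longleftrightarrow> sorted_wrt (\<ge>) lam \<and> (\<forall>p\<in>set lam. 0 < p) \<and> sum_list lam = n"

text \<open>Young diagram in English notation, matrix coordinates, 1-indexed: box (i,j).\<close>
definition boxes :: "nat list \<Rightarrow> (nat \<times> nat) set" where
  "boxes lam = {(i, j). 1 \<le> i \<and> i \<le> length lam \<and> 1 \<le> j \<and> j \<le> lam ! (i - 1)}"

definition content :: "nat \<times> nat \<Rightarrow> int" where
  "content b = int (snd b) - int (fst b)"

definition SYT :: "nat list \<Rightarrow> (nat \<times> nat \<Rightarrow> nat) set" where
  "SYT lam = {T. bij_betw T (boxes lam) {1..sum_list lam}
      \<and> (\<forall>i j. (i, j) \<in> boxes lam \<and> (i, j + 1) \<in> boxes lam \<longrightarrow> T (i, j) < T (i, j + 1))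
      \<and> (\<forall>i j. (i, j) \<in> boxes lam \<and> (i + 1, j) \<in> boxes lam \<longrightarrow> T (i, j) < T (i + 1, j))
      \<and> (\<forall>b. b \<notin> boxes lam \<longrightarrow> T b = 0)}"

definition pos :: "nat list \<Rightarrow> (nat \<times> nat \<Rightarrow> nat) \<Rightarrow> nat \<Rightarrow> nat \<times> nat" where
  "pos lam T k = inv_into (boxes lam) T k"

definition T_x :: "nat list \<Rightarrow> (int \<Rightarrow> 'a::field) \<Rightarrow> (nat \<times> nat \<Rightarrow> nat) \<Rightarrow> 'a" where
  "T_x lam x T = (let n = sum_list lam in
     \<Prod>k=1..n. 1 / (\<Sum>l=1..k. x (content (pos lam T (n + 1 - l)))))"

definition hook :: "nat list \<Rightarrow> nat \<Rightarrow> nat \<Rightarrow> (nat \<times> nat) set" where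
  "hook lam i j = {(i', j') \<in> boxes lam. (i' = i \<and> j' \<ge> j) \<or> (j' = j \<and> i' \<ge> i)}"

definition hook_x :: "nat list \<Rightarrow> nat \<Rightarrow> nat \<Rightarrow> (int \<Rightarrow> 'a::field) \<Rightarrow> 'a" where
  "hook_x lam i j x = (\<Sum>b\<in>hook lam i j. x (content b))"

end

theory Submission
  imports Defs "Jordan_Normal_Form.Determinant" "Subresultants.More_Homomorphisms"
begin

text \<open>Removing the box that carries the entry \<open>1\<close> shows that the weight sum \<open>\<Phi>(\<lambda>/\<mu>)\<close> over the
  standard tableaux of a skew shape satisfies \<open>\<sigma>(\<lambda>/\<mu>) \<Phi>(\<lambda>/\<mu>) = \<Sum> \<Phi>(\<lambda>/\<mu>')\<close>, where \<open>\<mu>'\<close> runs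
  over the partitions obtained from \<open>\<mu>\<close> by adding one box and \<open>\<sigma>(\<lambda>/\<mu>)\<close> is the total weight of
  the contents of \<open>\<lambda>/\<mu>\<close>. The determinants
  \<open>D(\<mu>) = det (\<Prod>m < \<beta>\<^sub>j(\<mu>). a(\<beta>\<^sub>i(\<lambda>)) - a(m))\<close>, with shifted parts \<open>\<beta>\<^sub>i(\<mu>) = \<mu>\<^sub>i + n - 1 - i\<close>
  and nodes \<open>a(m) = x\<^sub>-\<^sub>n + \<dots> + x\<^sub>m\<^sub>-\<^sub>n\<close>, satisfy the same recursion (a Pieri rule), so
  \<open>\<Phi>(\<lambda>/\<mu>) D(\<lambda>) = D(\<mu>)\<close>. The determinant \<open>D(\<emptyset>)\<close> is of Vandermonde type, and \<open>D(\<lambda>)\<close> is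
  triangular; by Frobenius' description of the hook lengths through the shifted parts, its diagonal
  is the same Vandermonde product times the \<open>x\<close>-hook lengths.

  This proves the formula whenever the relevant sums of weights do not vanish, in particular for
  the weights \<open>x\<^sub>t + X\<close> over the rational functions in \<open>X\<close>. With denominators cleared the formula
  becomes a polynomial identity in the weights, which specializes to \<open>X = 0\<close>.\<close>

hide_const (open) Polynomial.content

section \<open>Determinants of matrices given entrywise\<close>

lemma det_mat_Leibniz:
  "det (mat n n f) = (\<Sum>p | p permutes {0..<n}. signof p * (\<Prod>i = 0..<n. f (i, p i)))"
proof -
  have "det (mat n n f) = (\<Sum>p | p permutes {0..<n}. signof p * (\<Prod>i = 0..<n. mat n n f $$ (i, p i)))"
    by (rule det_def') simp
  also have "\<dots> = (\<Sum>p | p permutes {0..<n}. signof p * (\<Prod>i = 0..<n. f (i, p i)))"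
    by (intro sum.cong prod.cong refl) (auto dest: permutes_in_image)
  finally show ?thesis .
qed

lemma mat_cong: "(\<And>i j. i < n \<Longrightarrow> j < m \<Longrightarrow> f (i, j) = g (i, j)) \<Longrightarrow> mat n m f = mat n m g"
  by (rule eq_matI) auto

lemma prod_col_pick:
  fixes p :: "nat \<Rightarrow> nat"
  assumes p: "p permutes {0..<n}" and j: "j < n"
  shows "(\<Prod>i = 0..<n. if p i = j then u i else f i (p i)) =
    u (Hilbert_Choice.inv p j) * (\<Prod>i\<in>{0..<n} - {Hilbert_Choice.inv p j}. f i (p i))"
proof -
  have "Hilbert_Choice.inv p j \<in> {0..<n}"
    using permutes_in_image[OF permutes_inv[OF p]] j by simp
  moreover have "p i = j \<longleftrightarrow> i = Hilbert_Choice.inv p j" for i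
    using permutes_inv_eq[OF p] by metis
  ultimately show ?thesis
    by (simp add: prod.delta_remove)
qed

lemma det_mat_add_col:
  fixes u v :: "nat \<Rightarrow> 'a::comm_ring_1"
  assumes j: "j < n"
  shows "det (mat n n (\<lambda>(i, k). if k = j then u i + c * v i else f i k)) =
    det (mat n n (\<lambda>(i, k). if k = j then u i else f i k)) +
    c * det (mat n n (\<lambda>(i, k). if k = j then v i else f i k))"
proof -
  have "(\<Prod>i = 0..<n. if p i = j then u i + c * v i else f i (p i)) =
    (\<Prod>i = 0..<n. if p i = j then u i else f i (p i)) +
    c * (\<Prod>i = 0..<n. if p i = j then v i else f i (p i))" if "p permutes {0..<n}" for p
    using prod_col_pick[OF that j, where u = "\<lambda>i. u i + c * v i" and f = f]
      prod_col_pick[OF that j, where u = u and f = f] prod_col_pick[OF that j, where u = v and f = f]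
    by (simp add: algebra_simps)
  then show ?thesis
    by (simp add: det_mat_Leibniz sum_distrib_left sum.distrib[symmetric] algebra_simps)
qed

lemma det_mat_scale_rows:
  fixes c :: "nat \<Rightarrow> 'a::comm_ring_1"
  shows "det (mat n n (\<lambda>(i, k). c i * f i k)) = (\<Prod>i<n. c i) * det (mat n n (\<lambda>(i, k). f i k))"
  by (simp add: det_mat_Leibniz sum_distrib_left prod.distrib atLeast0LessThan algebra_simps)

text \<open>Each Leibniz term has exactly one factor in column \<open>j\<close>, so rescaling column \<open>j\<close> by the row
  weights \<open>y i\<close> and summing over \<open>j\<close> multiplies every term by \<open>\<Sum>i<n. y i\<close>.\<close>

lemma sum_det_mat_scale_col:
  fixes y :: "nat \<Rightarrow> 'a::comm_ring_1"
  shows "(\<Sum>j<n. det (mat n n (\<lambda>(i, k). if k = j then y i * f i k else f i k))) =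
    (\<Sum>i<n. y i) * det (mat n n (\<lambda>(i, k). f i k))"
proof -
  have key: "(\<Sum>j<n. \<Prod>i = 0..<n. if p i = j then y i * f i (p i) else f i (p i)) =
    (\<Sum>i<n. y i) * (\<Prod>i = 0..<n. f i (p i))" if p: "p permutes {0..<n}" for p
  proof -
    have "(\<Prod>i = 0..<n. if p i = j then y i * f i (p i) else f i (p i)) =
      y (Hilbert_Choice.inv p j) * (\<Prod>i = 0..<n. f i (p i))" if j: "j < n" for j
    proof -
      have "Hilbert_Choice.inv p j \<in> {0..<n}"
        using permutes_in_image[OF permutes_inv[OF p]] j by simp
      then have "(\<Prod>i = 0..<n. f i (p i)) = f (Hilbert_Choice.inv p j) j * (\<Prod>i\<in>{0..<n} - {Hilbert_Choice.inv p j}. f i (p i))"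
        by (simp add: prod.remove permutes_inverses(1)[OF p])
      then show ?thesis
        using prod_col_pick[OF p j, of "\<lambda>i. y i * f i (p i)"] by (simp add: permutes_inverses(1)[OF p])
    qed
    then have "(\<Sum>j<n. \<Prod>i = 0..<n. if p i = j then y i * f i (p i) else f i (p i)) =
      (\<Sum>j<n. y (Hilbert_Choice.inv p j)) * (\<Prod>i = 0..<n. f i (p i))"
      by (simp add: sum_distrib_right)
    also have "(\<Sum>j<n. y (Hilbert_Choice.inv p j)) = (\<Sum>i<n. y i)"
      using sum.permute[OF permutes_inv[OF p], of y] by (simp add: atLeast0LessThan comp_def)
    finally show ?thesis .
  qed
  have "(\<Sum>j<n. det (mat n n (\<lambda>(i, k). if k = j then y i * f i k else f i k))) =
    (\<Sum>p | p permutes {0..<n}. signof p *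
      (\<Sum>j<n. \<Prod>i = 0..<n. if p i = j then y i * f i (p i) else f i (p i)))"
    by (simp add: det_mat_Leibniz sum_distrib_left) (rule sum.swap)
  also have "\<dots> = (\<Sum>p | p permutes {0..<n}. (\<Sum>i<n. y i) * (signof p * (\<Prod>i = 0..<n. f i (p i))))"
    using key by (intro sum.cong) auto
  also have "\<dots> = (\<Sum>i<n. y i) * det (mat n n (\<lambda>(i, k). f i k))"
    by (simp add: det_mat_Leibniz sum_distrib_left)
  finally show ?thesis .
qed

lemma det_mat_zero_block:
  assumes j: "j < n" and zero: "\<And>i k. j \<le> i \<Longrightarrow> i < n \<Longrightarrow> k \<le> j \<Longrightarrow> f i k = 0"
  shows "det (mat n n (\<lambda>(i, k). f i k)) = (0::'a::comm_ring_1)"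
proof -
  have "(\<Prod>i = 0..<n. f i (p i)) = 0" if p: "p permutes {0..<n}" for p
  proof -
    have "\<exists>i\<in>{j..<n}. p i \<le> j"
    proof (rule ccontr)
      assume "\<not> (\<exists>i\<in>{j..<n}. p i \<le> j)"
      then have "p ` {j..<n} \<subseteq> {Suc j..<n}"
        using permutes_in_image[OF p] by (fastforce simp: not_le Suc_le_eq)
      moreover have "inj_on p {j..<n}"
        using permutes_inj[OF p] by (auto intro: inj_on_subset)
      ultimately have "card {j..<n} \<le> card {Suc j..<n}"
        using card_inj_on_le by blast
      then show False
        using j by simp
    qed
    then obtain i where "i \<in> {j..<n}" "p i \<le> j"
      by blast
    then show ?thesis
      using zero by (intro prod_zero) (auto intro!: bexI[of _ i])
  qed
  then show ?thesis
    by (simp add: det_mat_Leibniz)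
qed

lemma det_mat_upper_triangular:
  assumes "\<And>i k. k < i \<Longrightarrow> i < n \<Longrightarrow> f i k = 0"
  shows "det (mat n n (\<lambda>(i, k). f i k)) = (\<Prod>i<n. f i i :: 'a::comm_ring_1)"
proof -
  have "det (mat n n (\<lambda>(i, k). f i k)) = prod_list (diag_mat (mat n n (\<lambda>(i, k). f i k)))"
    by (rule det_upper_triangular) (auto simp: upper_triangular_def assms)
  also have "\<dots> = (\<Prod>i<n. f i i)"
    by (simp add: diag_mat_def prod.distinct_set_conv_list[symmetric] atLeast0LessThan[symmetric]
        cong: map_cong)
  finally show ?thesis .
qed

lemma det_mat_identical_cols:
  assumes "r < n" "s < n" "r \<noteq> s" "\<And>i. i < n \<Longrightarrow> f i r = f i s"
  shows "det (mat n n (\<lambda>(i, k). f i k)) = (0::'a::comm_ring_1)"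
  by (rule det_identical_columns[of _ n r s]) (use assms in \<open>auto intro: eq_vecI\<close>)

section \<open>Newton products and their Vandermonde determinant\<close>

definition newton :: "(nat \<Rightarrow> 'a::comm_ring_1) \<Rightarrow> 'a \<Rightarrow> nat \<Rightarrow> 'a" where
  "newton a y k = (\<Prod>m<k. y - a m)"

lemma newton_0 [simp]: "newton a y 0 = 1"
  by (simp add: newton_def)

lemma newton_Suc: "newton a y (Suc k) = newton a y k * (y - a k)"
  by (simp add: newton_def)

lemma newton_node_eq_0: "m < k \<Longrightarrow> newton a (a m) k = 0"
  unfolding newton_def by (rule prod_zero) auto

text \<open>Column operations turning all but the last column of the \<open>Suc N\<close>-matrix into
  multiples of \<open>z i - z N\<close>: column \<open>j\<close> minus \<open>z N - a (N - 1 - j)\<close> times column \<open>j + 1\<close>,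
  from left to right.\<close>

lemma det_newton_clear_last_row:
  fixes z :: "nat \<Rightarrow> 'a::comm_ring_1"
  assumes "r \<le> N"
  shows "det (mat (Suc N) (Suc N) (\<lambda>(i, j). if j < r then (z i - z N) * newton a (z i) (N - 1 - j)
      else newton a (z i) (N - j))) = det (mat (Suc N) (Suc N) (\<lambda>(i, j). newton a (z i) (N - j)))"
  using assms
proof (induction r)
  case 0
  show ?case
    by (intro arg_cong[where f = det] mat_cong) simp
next
  case (Suc r)
  let ?B = "\<lambda>r i j. if j < r then (z i - z N) * newton a (z i) (N - 1 - j) else newton a (z i) (N - j)"
  let ?u = "\<lambda>i. newton a (z i) (N - r)" and ?v = "\<lambda>i. newton a (z i) (N - 1 - r)"
  let ?c = "- (z N - a (N - 1 - r))"
  have r: "r < N"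
    using Suc.prems by simp
  have u: "?u i = ?v i * (z i - a (N - 1 - r))" for i
  proof -
    have "N - r = Suc (N - 1 - r)"
      using r by simp
    then show ?thesis
      by (simp only: newton_Suc)
  qed
  have col_u: "mat (Suc N) (Suc N) (\<lambda>(i, k). if k = r then ?u i else ?B r i k) =
      mat (Suc N) (Suc N) (\<lambda>(i, j). ?B r i j)"
    by (intro mat_cong) auto
  have col_v: "det (mat (Suc N) (Suc N) (\<lambda>(i, k). if k = r then ?v i else ?B r i k)) = 0"
    using r by (intro det_mat_identical_cols[of r _ "Suc r"]) auto
  have "det (mat (Suc N) (Suc N) (\<lambda>(i, j). ?B (Suc r) i j)) =
      det (mat (Suc N) (Suc N) (\<lambda>(i, k). if k = r then ?u i + ?c * ?v i else ?B r i k))"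
    unfolding u by (intro arg_cong[where f = det] mat_cong) (auto simp: algebra_simps)
  also have "\<dots> = det (mat (Suc N) (Suc N) (\<lambda>(i, k). if k = r then ?u i else ?B r i k)) +
      ?c * det (mat (Suc N) (Suc N) (\<lambda>(i, k). if k = r then ?v i else ?B r i k))"
    using r by (intro det_mat_add_col) simp
  also have "\<dots> = det (mat (Suc N) (Suc N) (\<lambda>(i, j). ?B r i j))"
    by (simp only: col_u col_v mult_zero_right add_0_right)
  also have "\<dots> = det (mat (Suc N) (Suc N) (\<lambda>(i, j). newton a (z i) (N - j)))"
    using r by (intro Suc.IH) simp
  finally show ?case .
qed

lemma det_newton_vandermonde:
  fixes z :: "nat \<Rightarrow> 'a::comm_ring_1"
  shows "det (mat N N (\<lambda>(i, j). newton a (z i) (N - 1 - j))) = (\<Prod>i<N. \<Prod>k\<in>{i<..<N}. z i - z k)"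
proof (induction N)
  case (Suc N)
  define C where "C = mat (Suc N) (Suc N) (\<lambda>(i, j). if j < N then (z i - z N) * newton a (z i) (N - 1 - j)
      else newton a (z i) (N - j))"
  have "mat (Suc N) (Suc N) (\<lambda>(i, j). newton a (z i) (Suc N - 1 - j)) =
      mat (Suc N) (Suc N) (\<lambda>(i, j). newton a (z i) (N - j))"
    by (intro mat_cong) simp
  then have "det (mat (Suc N) (Suc N) (\<lambda>(i, j). newton a (z i) (Suc N - 1 - j))) = det C"
    unfolding C_def using det_newton_clear_last_row[of N N z a] by (simp only: le_refl)
  also have "\<dots> = (\<Sum>j<Suc N. C $$ (N, j) * cofactor C N j)"
    by (rule laplace_expansion_row) (auto simp: C_def)
  also have "\<dots> = cofactor C N N"
    by (simp add: C_def)
  also have "\<dots> = det (mat_delete C N N)"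
    by (simp add: cofactor_def)
  also have "\<dots> = det (mat N N (\<lambda>(i, j). (z i - z N) * newton a (z i) (N - 1 - j)))"
    by (intro arg_cong[where f = det] eq_matI) (auto simp: mat_delete_def C_def)
  also have "\<dots> = (\<Prod>i<N. z i - z N) * (\<Prod>i<N. \<Prod>k\<in>{i<..<N}. z i - z k)"
    using det_mat_scale_rows[where c="\<lambda>i. z i - z N" and n=N and f="\<lambda>i j. newton a (z i) (N - 1 - j)"]
      Suc.IH by (simp only:)
  also have "\<dots> = (\<Prod>i<Suc N. \<Prod>k\<in>{i<..<Suc N}. z i - z k)"
  proof -
    have "{i<..<Suc N} = insert N {i<..<N}" if "i < N" for i
      using that by auto
    moreover have "{N<..<Suc N} = {}"
      by auto
    ultimately show ?thesis
      by (simp add: prod.distrib)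
  qed
  finally show ?case .
qed (simp add: det_dim_zero)

section \<open>Standard tableaux of arbitrary finite shapes\<close>

definition std_tableaux :: "(nat \<times> nat) set \<Rightarrow> (nat \<times> nat \<Rightarrow> nat) set" where
  "std_tableaux S = {T. bij_betw T S {1..card S}
      \<and> (\<forall>i j. (i, j) \<in> S \<and> (i, j + 1) \<in> S \<longrightarrow> T (i, j) < T (i, j + 1))
      \<and> (\<forall>i j. (i, j) \<in> S \<and> (i + 1, j) \<in> S \<longrightarrow> T (i, j) < T (i + 1, j))
      \<and> (\<forall>b. b \<notin> S \<longrightarrow> T b = 0)}"

definition tableau_weight :: "(nat \<times> nat) set \<Rightarrow> (int \<Rightarrow> 'a::field) \<Rightarrow> (nat \<times> nat \<Rightarrow> nat) \<Rightarrow> 'a" where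
  "tableau_weight S x T =
    (\<Prod>k=1..card S. 1 / (\<Sum>l=1..k. x (content (inv_into S T (card S + 1 - l)))))"

definition tableau_sum :: "(nat \<times> nat) set \<Rightarrow> (int \<Rightarrow> 'a::field) \<Rightarrow> 'a" where
  "tableau_sum S x = (\<Sum>T\<in>std_tableaux S. tableau_weight S x T)"

text \<open>The boxes that can carry the entry \<open>1\<close> of a standard tableau of shape \<open>S\<close>.\<close>

definition inner_corners :: "(nat \<times> nat) set \<Rightarrow> (nat \<times> nat) set" where
  "inner_corners S = {(i, j) \<in> S. (0 < i \<longrightarrow> (i - 1, j) \<notin> S) \<and> (0 < j \<longrightarrow> (i, j - 1) \<notin> S)}"

definition tableau_cons :: "(nat \<times> nat) set \<Rightarrow> nat \<times> nat \<Rightarrow> (nat \<times> nat \<Rightarrow> nat) \<Rightarrow> nat \<times> nat \<Rightarrow> nat" where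
  "tableau_cons S b T = (\<lambda>p. if p = b then 1 else if p \<in> S then T p + 1 else 0)"

definition tableau_tail :: "nat \<times> nat \<Rightarrow> (nat \<times> nat \<Rightarrow> nat) \<Rightarrow> nat \<times> nat \<Rightarrow> nat" where
  "tableau_tail b T = (\<lambda>p. if p = b then 0 else T p - 1)"

lemma mem_inner_corners:
  "(i, j) \<in> inner_corners S \<longleftrightarrow> (i, j) \<in> S \<and> (0 < i \<longrightarrow> (i - 1, j) \<notin> S) \<and> (0 < j \<longrightarrow> (i, j - 1) \<notin> S)"
  by (simp add: inner_corners_def)

lemma inner_corners_subset: "inner_corners S \<subseteq> S"
  by (auto simp: inner_corners_def)

lemma finite_std_tableaux:
  assumes "finite S"
  shows "finite (std_tableaux S)"
proof (rule finite_subset)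
  show "std_tableaux S \<subseteq> {T. \<forall>p. (p \<in> S \<longrightarrow> T p \<in> {0..card S}) \<and> (p \<notin> S \<longrightarrow> T p = 0)}"
    by (auto simp: std_tableaux_def bij_betw_def)
  show "finite {T. \<forall>p. (p \<in> S \<longrightarrow> T p \<in> {0..card S}) \<and> (p \<notin> S \<longrightarrow> T p = (0::nat))}"
    by (rule finite_set_of_finite_funs) (use assms in auto)
qed

lemma std_tableaux_bij: "T \<in> std_tableaux S \<Longrightarrow> bij_betw T S {1..card S}"
  by (simp add: std_tableaux_def)

lemma std_tableaux_row_less:
  "T \<in> std_tableaux S \<Longrightarrow> (i, j) \<in> S \<Longrightarrow> (i, Suc j) \<in> S \<Longrightarrow> T (i, j) < T (i, Suc j)"
  by (simp add: std_tableaux_def)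

lemma std_tableaux_col_less:
  "T \<in> std_tableaux S \<Longrightarrow> (i, j) \<in> S \<Longrightarrow> (Suc i, j) \<in> S \<Longrightarrow> T (i, j) < T (Suc i, j)"
  by (simp add: std_tableaux_def)

lemma std_tableaux_outside: "T \<in> std_tableaux S \<Longrightarrow> p \<notin> S \<Longrightarrow> T p = 0"
  unfolding std_tableaux_def by blast

lemma std_tableauxI:
  assumes "bij_betw T S {1..card S}"
    and "\<And>i j. (i, j) \<in> S \<Longrightarrow> (i, Suc j) \<in> S \<Longrightarrow> T (i, j) < T (i, Suc j)"
    and "\<And>i j. (i, j) \<in> S \<Longrightarrow> (Suc i, j) \<in> S \<Longrightarrow> T (i, j) < T (Suc i, j)"
    and "\<And>p. p \<notin> S \<Longrightarrow> T p = 0"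
  shows "T \<in> std_tableaux S"
  using assms by (simp add: std_tableaux_def)

lemma std_tableaux_empty: "std_tableaux {} = {\<lambda>_. 0}"
proof -
  have "T \<in> std_tableaux {} \<longleftrightarrow> T = (\<lambda>_. 0)" for T
  proof
    show "T = (\<lambda>_. 0)" if "T \<in> std_tableaux {}"
      using std_tableaux_outside[OF that] by (simp add: fun_eq_iff)
    show "T \<in> std_tableaux {}" if "T = (\<lambda>_. 0)"
      using that by (intro std_tableauxI) (simp_all add: bij_betw_def)
  qed
  then show ?thesis
    by blast
qed

lemma bij_betw_tableau_cons:
  assumes "finite S" "b \<in> S" and T: "bij_betw T (S - {b}) {1..card (S - {b})}"
  shows "bij_betw (tableau_cons S b T) S {1..card S}"
proof -
  define m where "m = card (S - {b})"
  have card_S: "card S = Suc m"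
    unfolding m_def using card_Suc_Diff1[OF assms(1,2)] by linarith
  have "bij_betw (Suc \<circ> T) (S - {b}) {2..Suc m}"
    using bij_betw_trans[OF T[folded m_def], of Suc "{2..Suc m}"] by (simp add: bij_betw_def)
  then have "bij_betw (tableau_cons S b T) (S - {b}) {2..Suc m}"
    by (rule iffD1[OF bij_betw_cong, rotated]) (simp add: tableau_cons_def)
  then have "bij_betw (tableau_cons S b T) (S - {b} \<union> {b}) ({2..Suc m} \<union> {1})"
    by (subst (asm) notIn_Un_bij_betw3[of b]) (auto simp: tableau_cons_def)
  moreover have "S - {b} \<union> {b} = S" "{2..Suc m} \<union> {1} = {1..card S}"
    using assms(2) card_S by auto
  ultimately show ?thesis
    by simp
qed

lemma bij_betw_tableau_tail:
  assumes T: "bij_betw T S {1..card S}" and "finite S" "b \<in> S" "T b = 1"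
  shows "bij_betw (tableau_tail b T) (S - {b}) {1..card (S - {b})}"
proof -
  define m where "m = card (S - {b})"
  have "card S = Suc m"
    unfolding m_def using card_Suc_Diff1[OF assms(2,3)] by linarith
  then have "bij_betw T (S - {b}) ({1..Suc m} - {1})"
    using bij_betw_DiffI[OF T, of "{b}" "{1}"] assms(3,4) by simp
  moreover have "{1..Suc m} - {1} = {2..Suc m}"
    by auto
  moreover have "bij_betw (\<lambda>v. v - 1) {2..Suc m} {1..m}"
  proof (rule bij_betw_imageI)
    show "inj_on (\<lambda>v. v - 1) {2..Suc m}"
      by (rule inj_onI) auto
    show "(\<lambda>v. v - 1) ` {2..Suc m} = {1..m}"
    proof
      show "{1..m} \<subseteq> (\<lambda>v. v - 1) ` {2..Suc m}"
      proof
        fix v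
        assume "v \<in> {1..m}"
        then show "v \<in> (\<lambda>v. v - 1) ` {2..Suc m}"
          by (intro rev_image_eqI[of "Suc v"]) simp_all
      qed
    qed auto
  qed
  ultimately have "bij_betw ((\<lambda>v. v - 1) \<circ> T) (S - {b}) {1..m}"
    using bij_betw_trans by fastforce
  then show ?thesis
    unfolding m_def by (rule iffD1[OF bij_betw_cong, rotated]) (simp add: tableau_tail_def)
qed

lemma tableau_cons_less:
  assumes "p \<in> S" "q \<in> S - {b}" "1 \<le> T q" "p \<noteq> b \<Longrightarrow> T p < T q"
  shows "tableau_cons S b T p < tableau_cons S b T q"
  using assms by (auto simp: tableau_cons_def)

lemma tableau_cons_std:
  assumes "finite S" and b: "b \<in> inner_corners S" and T: "T \<in> std_tableaux (S - {b})"
  shows "tableau_cons S b T \<in> std_tableaux S"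
proof (rule std_tableauxI)
  have "b \<in> S"
    using b inner_corners_subset by blast
  then show "bij_betw (tableau_cons S b T) S {1..card S}"
    by (rule bij_betw_tableau_cons[OF assms(1) _ std_tableaux_bij[OF T]])
  have ge_1: "1 \<le> T p" if "p \<in> S - {b}" for p
    using bij_betwE[OF std_tableaux_bij[OF T]] that by fastforce
  fix i j
  show "tableau_cons S b T (i, j) < tableau_cons S b T (i, Suc j)"
    if "(i, j) \<in> S" "(i, Suc j) \<in> S"
  proof -
    have "(i, Suc j) \<noteq> b"
      using b that by (auto simp: mem_inner_corners)
    then show ?thesis
      using that ge_1 std_tableaux_row_less[OF T] by (intro tableau_cons_less) auto
  qed
  show "tableau_cons S b T (i, j) < tableau_cons S b T (Suc i, j)"
    if "(i, j) \<in> S" "(Suc i, j) \<in> S"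
  proof -
    have "(Suc i, j) \<noteq> b"
      using b that by (auto simp: mem_inner_corners)
    then show ?thesis
      using that ge_1 std_tableaux_col_less[OF T] by (intro tableau_cons_less) auto
  qed
next
  show "tableau_cons S b T p = 0" if "p \<notin> S" for p
    using that inner_corners_subset b by (auto simp: tableau_cons_def)
qed

lemma tableau_tail_std:
  assumes "finite S" and T: "T \<in> std_tableaux S" and "b \<in> S" "T b = 1"
  shows "tableau_tail b T \<in> std_tableaux (S - {b})"
proof (rule std_tableauxI)
  have bij: "bij_betw T S {1..card S}"
    by (rule std_tableaux_bij[OF T])
  then show "bij_betw (tableau_tail b T) (S - {b}) {1..card (S - {b})}"
    using assms by (intro bij_betw_tableau_tail)
  have ge_2: "2 \<le> T p" if "p \<in> S - {b}" for p
  proof -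
    have "T p \<noteq> 1"
      using that assms(3,4) bij_betw_imp_inj_on[OF bij] by (metis DiffE inj_onD singletonI)
    moreover have "T p \<in> {1..card S}"
      using that bij_betwE[OF bij] by blast
    ultimately show ?thesis
      by simp
  qed
  fix i j
  show "tableau_tail b T (i, j) < tableau_tail b T (i, Suc j)"
    if "(i, j) \<in> S - {b}" "(i, Suc j) \<in> S - {b}"
    using that ge_2[OF that(1)] std_tableaux_row_less[OF T, of i j] by (simp add: tableau_tail_def)
  show "tableau_tail b T (i, j) < tableau_tail b T (Suc i, j)"
    if "(i, j) \<in> S - {b}" "(Suc i, j) \<in> S - {b}"
    using that ge_2[OF that(1)] std_tableaux_col_less[OF T, of i j] by (simp add: tableau_tail_def)
next
  show "tableau_tail b T p = 0" if "p \<notin> S - {b}" for p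
    using that std_tableaux_outside[OF T, of p] by (auto simp: tableau_tail_def)
qed

lemma entry_one_inner_corner:
  assumes T: "T \<in> std_tableaux S" and ij: "(i, j) \<in> S" "T (i, j) = 1"
  shows "(i, j) \<in> inner_corners S"
proof -
  have ge_1: "1 \<le> T p" if "p \<in> S" for p
    using bij_betwE[OF std_tableaux_bij[OF T]] that by fastforce
  have "(i - 1, j) \<notin> S" if "0 < i"
  proof
    assume above: "(i - 1, j) \<in> S"
    obtain i' where i: "i = Suc i'"
      using gr0_implies_Suc[OF \<open>0 < i\<close>] by blast
    then have "T (i', j) < T (i, j)"
      using std_tableaux_col_less[OF T, of i' j] above ij(1) by simp
    then show False
      using ge_1[OF above] ij(2) i by simp
  qed
  moreover have "(i, j - 1) \<notin> S" if "0 < j"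
  proof
    assume left: "(i, j - 1) \<in> S"
    obtain j' where j: "j = Suc j'"
      using gr0_implies_Suc[OF \<open>0 < j\<close>] by blast
    then have "T (i, j') < T (i, j)"
      using std_tableaux_row_less[OF T, of i j'] left ij(1) by simp
    then show False
      using ge_1[OF left] ij(2) j by simp
  qed
  ultimately show ?thesis
    using ij by (simp add: mem_inner_corners)
qed

lemma tableau_cons_tail:
  assumes T: "T \<in> std_tableaux S" and "T b = 1"
  shows "tableau_cons S b (tableau_tail b T) = T"
proof
  fix p
  have "1 \<le> T p" if "p \<in> S"
    using bij_betwE[OF std_tableaux_bij[OF T]] that by fastforce
  then show "tableau_cons S b (tableau_tail b T) p = T p"
    using assms(2) std_tableaux_outside[OF T, of p] by (auto simp: tableau_cons_def tableau_tail_def)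
qed

lemma tableau_tail_cons:
  assumes T: "T \<in> std_tableaux (S - {b})"
  shows "tableau_tail b (tableau_cons S b T) = T"
proof
  fix p
  show "tableau_tail b (tableau_cons S b T) p = T p"
    using std_tableaux_outside[OF T, of p] by (auto simp: tableau_cons_def tableau_tail_def)
qed

lemma inj_on_tableau_cons:
  assumes "finite S"
  shows "inj_on (\<lambda>(b, T). tableau_cons S b T) (SIGMA b:inner_corners S. std_tableaux (S - {b}))"
proof (rule inj_onI)
  fix u u' :: "(nat \<times> nat) \<times> (nat \<times> nat \<Rightarrow> nat)"
  obtain b T b' T' where uu: "u = (b, T)" "u' = (b', T')"
    by (cases u, cases u')
  assume "u \<in> (SIGMA b:inner_corners S. std_tableaux (S - {b}))"
    and "u' \<in> (SIGMA b:inner_corners S. std_tableaux (S - {b}))"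
    and "(\<lambda>(b, T). tableau_cons S b T) u = (\<lambda>(b, T). tableau_cons S b T) u'"
  then have b: "b \<in> inner_corners S" "T \<in> std_tableaux (S - {b})"
    and b': "b' \<in> inner_corners S" "T' \<in> std_tableaux (S - {b'})"
    and eq: "tableau_cons S b T = tableau_cons S b' T'"
    unfolding uu by simp_all
  have "inj_on (tableau_cons S b T) S"
    using std_tableaux_bij[OF tableau_cons_std[OF assms b]] by (rule bij_betw_imp_inj_on)
  moreover have "b \<in> S" "b' \<in> S"
    using b b' inner_corners_subset by blast+
  moreover have "tableau_cons S b T b' = tableau_cons S b T b"
    using fun_cong[OF eq, of b'] by (simp add: tableau_cons_def)
  ultimately have "b = b'"
    by (auto dest: inj_onD)
  then show "u = u'"
    using uu eq tableau_tail_cons[OF b(2)] tableau_tail_cons[OF b'(2)] by metis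
qed

lemma std_tableaux_eq_image_tableau_cons:
  assumes "finite S" "S \<noteq> {}"
  shows "std_tableaux S = (\<lambda>(b, T). tableau_cons S b T) ` (SIGMA b:inner_corners S. std_tableaux (S - {b}))"
proof
  show "(\<lambda>(b, T). tableau_cons S b T) ` (SIGMA b:inner_corners S. std_tableaux (S - {b})) \<subseteq> std_tableaux S"
    by (auto intro!: tableau_cons_std[OF assms(1)])
  show "std_tableaux S \<subseteq> (\<lambda>(b, T). tableau_cons S b T) ` (SIGMA b:inner_corners S. std_tableaux (S - {b}))"
  proof
    fix T
    assume T: "T \<in> std_tableaux S"
    have "1 \<le> card S"
      using assms by (simp add: Suc_le_eq card_gt_0_iff)
    then have "1 \<in> T ` S"
      using std_tableaux_bij[OF T] by (simp add: bij_betw_def)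
    then obtain b where b: "b \<in> S" "T b = 1"
      by (metis imageE)
    have "b \<in> inner_corners S"
      using entry_one_inner_corner[OF T, of "fst b" "snd b"] b by simp
    moreover have "tableau_tail b T \<in> std_tableaux (S - {b})"
      by (rule tableau_tail_std[OF assms(1) T b])
    moreover note tableau_cons_tail[OF T b(2)]
    ultimately show "T \<in> (\<lambda>(b, T). tableau_cons S b T) ` (SIGMA b:inner_corners S. std_tableaux (S - {b}))"
      by (intro image_eqI[where x = "(b, tableau_tail b T)"]) simp_all
  qed
qed

lemma bij_betw_tableau_cons_corners:
  assumes "finite S" "S \<noteq> {}"
  shows "bij_betw (\<lambda>(b, T). tableau_cons S b T) (SIGMA b:inner_corners S. std_tableaux (S - {b}))
    (std_tableaux S)"
  using inj_on_tableau_cons[OF assms(1)] std_tableaux_eq_image_tableau_cons[OF assms]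
  by (simp add: bij_betw_def)

lemma content_sum_tableau:
  assumes "bij_betw T S {1..card S}"
  shows "(\<Sum>l=1..card S. x (content (inv_into S T (card S + 1 - l)))) = (\<Sum>p\<in>S. x (content p))"
proof -
  have "(\<Sum>l=1..card S. x (content (inv_into S T (card S + 1 - l)))) =
      (\<Sum>v=1..card S. x (content (inv_into S T v)))"
    using sum.atLeastAtMost_rev[of "\<lambda>v. x (content (inv_into S T v))" 1 "card S"] by simp
  also have "\<dots> = (\<Sum>p\<in>S. x (content (inv_into S T (T p))))"
    by (rule sum.reindex_bij_betw[OF assms, symmetric])
  also have "\<dots> = (\<Sum>p\<in>S. x (content p))"
    by (intro sum.cong) (simp_all add: bij_betw_inv_into_left[OF assms])
  finally show ?thesis .
qed

lemma inv_into_tableau_cons: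
  assumes "finite S" "b \<in> S" and T: "bij_betw T (S - {b}) {1..card (S - {b})}"
    and "2 \<le> v" "v \<le> card S"
  shows "inv_into S (tableau_cons S b T) v = inv_into (S - {b}) T (v - 1)"
proof -
  let ?q = "inv_into (S - {b}) T (v - 1)"
  have "v - 1 \<in> T ` (S - {b})"
    using T assms by (auto simp: bij_betw_def card_Suc_Diff1)
  then have "?q \<in> S - {b}" "T ?q = v - 1"
    by (rule inv_into_into, rule f_inv_into_f)
  then have "tableau_cons S b T ?q = v"
    using assms(4) by (simp add: tableau_cons_def)
  moreover have "inj_on (tableau_cons S b T) S"
    using bij_betw_tableau_cons[OF assms(1-3)] by (simp add: bij_betw_def)
  ultimately show ?thesis
    using \<open>?q \<in> S - {b}\<close> by (metis DiffD1 inv_into_f_f)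
qed

text \<open>The entry \<open>1\<close> only enters the last factor of the weight, whose denominator is the
  content sum of the whole shape.\<close>

lemma tableau_weight_cons:
  assumes "finite S" and b: "b \<in> inner_corners S" and T: "T \<in> std_tableaux (S - {b})"
  shows "tableau_weight S x (tableau_cons S b T) = 1 / (\<Sum>p\<in>S. x (content p)) * tableau_weight (S - {b}) x T"
proof -
  let ?T = "tableau_cons S b T"
  define m where "m = card (S - {b})"
  have "b \<in> S"
    using b inner_corners_subset by blast
  have card_S: "card S = Suc m"
    unfolding m_def using card_Suc_Diff1[OF assms(1) \<open>b \<in> S\<close>] by linarith
  have T_bij: "bij_betw T (S - {b}) {1..m}"
    using T by (simp add: std_tableaux_def m_def)
  define G where "G k = 1 / (\<Sum>l=1..k. x (content (inv_into S ?T (card S + 1 - l))))" for k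
  have "tableau_weight S x ?T = (\<Prod>k=1..m. G k) * G (card S)"
    unfolding tableau_weight_def G_def card_S by simp
  also have "(\<Prod>k=1..m. G k) = tableau_weight (S - {b}) x T"
  proof -
    have "inv_into S ?T (card S + 1 - l) = inv_into (S - {b}) T (m + 1 - l)" if "1 \<le> l" "l \<le> m" for l
      using inv_into_tableau_cons[OF assms(1) \<open>b \<in> S\<close> T_bij[unfolded m_def], of "card S + 1 - l"]
        that card_S by simp
    then show ?thesis
      unfolding tableau_weight_def m_def[symmetric] G_def
      by (intro prod.cong refl arg_cong[where f = "\<lambda>s. 1 / s"] sum.cong) auto
  qed
  also have "G (card S) = 1 / (\<Sum>p\<in>S. x (content p))"
    unfolding G_def using tableau_cons_std[OF assms]
    by (subst content_sum_tableau) (simp_all add: std_tableaux_def)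
  finally show ?thesis
    by (simp add: mult.commute)
qed

lemma tableau_sum_remove_corner:
  assumes "finite S" "S \<noteq> {}"
  shows "tableau_sum S x = 1 / (\<Sum>p\<in>S. x (content p)) * (\<Sum>b\<in>inner_corners S. tableau_sum (S - {b}) x)"
proof -
  have "finite (inner_corners S)"
    using assms(1) inner_corners_subset by (rule finite_subset[rotated])
  then have "tableau_sum S x = (\<Sum>b\<in>inner_corners S. \<Sum>T\<in>std_tableaux (S - {b}). tableau_weight S x (tableau_cons S b T))"
    unfolding tableau_sum_def sum.reindex_bij_betw[OF bij_betw_tableau_cons_corners[OF assms], symmetric]
    using assms(1) by (subst sum.Sigma) (auto intro: finite_std_tableaux simp: case_prod_beta)
  also have "\<dots> = 1 / (\<Sum>p\<in>S. x (content p)) * (\<Sum>b\<in>inner_corners S. tableau_sum (S - {b}) x)"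
    using assms(1) by (simp add: tableau_weight_cons tableau_sum_def sum_distrib_left)
  finally show ?thesis .
qed

lemma tableau_sum_empty [simp]: "tableau_sum {} x = 1"
  by (simp add: tableau_sum_def tableau_weight_def std_tableaux_empty)

section \<open>Skew shapes inside a partition\<close>

lemma sum_nat_interval_shift:
  "(\<Sum>c\<in>{u<..v}. x (int c - s)) = (\<Sum>t\<in>{int u - s<..int v - s}. x t)"
proof (rule sum.reindex_bij_betw)
  show "bij_betw (\<lambda>c. int c - s) {u<..v} {int u - s<..int v - s}"
  proof (rule bij_betw_imageI)
    show "inj_on (\<lambda>c. int c - s) {u<..v}"
      by (rule inj_onI) simp
    show "(\<lambda>c. int c - s) ` {u<..v} = {int u - s<..int v - s}"
    proof
      show "{int u - s<..int v - s} \<subseteq> (\<lambda>c. int c - s) ` {u<..v}"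
      proof
        fix t
        assume "t \<in> {int u - s<..int v - s}"
        then show "t \<in> (\<lambda>c. int c - s) ` {u<..v}"
          by (intro rev_image_eqI[of "nat (t + s)"]) auto
      qed
    qed auto
  qed
qed

text \<open>Rows of a diagram are \<open>1\<close>-indexed, as in \<^const>\<open>boxes\<close>, while the parts of \<open>lam\<close> and of
  the inner partition \<open>mu\<close> are \<open>0\<close>-indexed: row \<open>i\<close> of the skew shape \<open>lam / mu\<close> consists of the
  columns \<open>mu (i - 1) < j \<le> lam ! (i - 1)\<close>.\<close>

locale partition_shape =
  fixes lam :: "nat list"
  assumes sorted: "sorted_wrt (\<ge>) lam"
begin

lemma parts_antimono: "i \<le> k \<Longrightarrow> k < length lam \<Longrightarrow> lam ! k \<le> lam ! i"
  using sorted by (cases "i = k") (auto simp: sorted_wrt_iff_nth_less)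

definition inner_partition :: "(nat \<Rightarrow> nat) \<Rightarrow> bool" where
  "inner_partition mu \<longleftrightarrow>
    (\<forall>i k. i \<le> k \<longrightarrow> k < length lam \<longrightarrow> mu k \<le> mu i) \<and> (\<forall>i < length lam. mu i \<le> lam ! i)"

definition skew_shape :: "(nat \<Rightarrow> nat) \<Rightarrow> (nat \<times> nat) set" where
  "skew_shape mu = {(i, j). 1 \<le> i \<and> i \<le> length lam \<and> mu (i - 1) < j \<and> j \<le> lam ! (i - 1)}"

definition addable_rows :: "(nat \<Rightarrow> nat) \<Rightarrow> nat set" where
  "addable_rows mu = {r. r < length lam \<and> mu r < lam ! r \<and> (r = 0 \<or> mu r < mu (r - 1))}"

abbreviation (input) add_box :: "(nat \<Rightarrow> nat) \<Rightarrow> nat \<Rightarrow> nat \<Rightarrow> nat" where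
  "add_box mu r \<equiv> mu(r := Suc (mu r))"

lemma mem_skew_shape [simp]:
  "(i, j) \<in> skew_shape mu \<longleftrightarrow> 1 \<le> i \<and> i \<le> length lam \<and> mu (i - 1) < j \<and> j \<le> lam ! (i - 1)"
  by (simp add: skew_shape_def)

lemma skew_shape_0: "skew_shape (\<lambda>_. 0) = boxes lam"
  by (auto simp: skew_shape_def boxes_def)

lemma skew_shape_eq_image:
  "skew_shape mu = (\<lambda>(r, c). (Suc r, c)) ` (SIGMA r:{..<length lam}. {mu r<..lam ! r})"
proof
  show "skew_shape mu \<subseteq> (\<lambda>(r, c). (Suc r, c)) ` (SIGMA r:{..<length lam}. {mu r<..lam ! r})"
  proof
    fix p
    assume "p \<in> skew_shape mu"
    then obtain i j where "p = (i, j)" "1 \<le> i" "i \<le> length lam" "mu (i - 1) < j" "j \<le> lam ! (i - 1)"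
      unfolding skew_shape_def by blast
    then show "p \<in> (\<lambda>(r, c). (Suc r, c)) ` (SIGMA r:{..<length lam}. {mu r<..lam ! r})"
      by (intro rev_image_eqI[of "(i - 1, j)"]) auto
  qed
qed auto

lemma finite_skew_shape: "finite (skew_shape mu)"
  unfolding skew_shape_eq_image by auto

lemma inner_partition_0: "inner_partition (\<lambda>_. 0)"
  by (simp add: inner_partition_def)

lemma inner_partition_antimono: "inner_partition mu \<Longrightarrow> i \<le> k \<Longrightarrow> k < length lam \<Longrightarrow> mu k \<le> mu i"
  by (simp add: inner_partition_def)

lemma inner_partition_le: "inner_partition mu \<Longrightarrow> i < length lam \<Longrightarrow> mu i \<le> lam ! i"
  by (simp add: inner_partition_def)

lemma inner_partition_add_box:
  assumes mu: "inner_partition mu" and r: "r \<in> addable_rows mu"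
  shows "inner_partition (add_box mu r)"
proof -
  note anti = inner_partition_antimono[OF mu]
  have r_props: "r < length lam" "mu r < lam ! r" "r = 0 \<or> mu r < mu (r - 1)"
    using r by (simp_all add: addable_rows_def)
  have less: "mu r < mu i" if "i < r" for i
  proof -
    have "mu r < mu (r - 1)"
      using r_props that by auto
    moreover have "mu (r - 1) \<le> mu i"
      using anti[of i "r - 1"] that r_props(1) by simp
    ultimately show ?thesis
      by simp
  qed
  show ?thesis
    unfolding inner_partition_def
  proof (intro conjI allI impI)
    fix i k
    assume "i \<le> k" "k < length lam"
    then show "add_box mu r k \<le> add_box mu r i"
      using anti[of i k] anti[of r k] less[of i] by (cases "k = r"; cases "i = r") auto
  next
    fix i
    assume "i < length lam"
    then show "add_box mu r i \<le> lam ! i"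
      using inner_partition_le[OF mu] r_props by (cases "i = r") auto
  qed
qed

lemma skew_shape_add_box:
  assumes "r \<in> addable_rows mu"
  shows "skew_shape (add_box mu r) = skew_shape mu - {(Suc r, Suc (mu r))}"
proof -
  have box_iff: "(i, j) \<in> skew_shape (add_box mu r) \<longleftrightarrow> (i, j) \<in> skew_shape mu - {(Suc r, Suc (mu r))}"
    for i j
  proof (cases "i = Suc r")
    case True
    then show ?thesis
      using assms by (auto simp: addable_rows_def)
  next
    case False
    then have "i = 0 \<or> i - 1 \<noteq> r"
      by auto
    then show ?thesis
      using False by auto
  qed
  show ?thesis
  proof (rule Set.set_eqI)
    fix p :: "nat \<times> nat"
    show "p \<in> skew_shape (add_box mu r) \<longleftrightarrow> p \<in> skew_shape mu - {(Suc r, Suc (mu r))}"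
      using box_iff[of "fst p" "snd p"] by simp
  qed
qed

lemma inner_corners_skew_shape:
  "inner_corners (skew_shape mu) = (\<lambda>r. (Suc r, Suc (mu r))) ` addable_rows mu"
proof -
  have corner_iff: "(i, j) \<in> inner_corners (skew_shape mu) \<longleftrightarrow>
      (i, j) \<in> (\<lambda>r. (Suc r, Suc (mu r))) ` addable_rows mu" for i j
  proof
    assume corner: "(i, j) \<in> inner_corners (skew_shape mu)"
    then have "(i, j) \<in> skew_shape mu"
      using inner_corners_subset by blast
    then obtain r where r: "i = Suc r" "r < length lam" "mu r < j" "j \<le> lam ! r"
      by (cases i) auto
    then have j: "j = Suc (mu r)"
      using corner by (auto simp: mem_inner_corners)
    have "r = 0 \<or> mu r < mu (r - 1)"
    proof (cases r)
      case (Suc r')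
      then have "lam ! r \<le> lam ! r'"
        using parts_antimono r(2) by simp
      then show ?thesis
        using corner r j Suc by (auto simp: mem_inner_corners)
    qed simp
    then show "(i, j) \<in> (\<lambda>r. (Suc r, Suc (mu r))) ` addable_rows mu"
      using r j by (auto simp: addable_rows_def)
  next
    assume "(i, j) \<in> (\<lambda>r. (Suc r, Suc (mu r))) ` addable_rows mu"
    then show "(i, j) \<in> inner_corners (skew_shape mu)"
      by (auto simp: mem_inner_corners addable_rows_def Suc_le_eq)
  qed
  show ?thesis
  proof (rule Set.set_eqI)
    fix p :: "nat \<times> nat"
    show "p \<in> inner_corners (skew_shape mu) \<longleftrightarrow> p \<in> (\<lambda>r. (Suc r, Suc (mu r))) ` addable_rows mu"
      using corner_iff[of "fst p" "snd p"] by simp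
  qed
qed

lemma skew_shape_empty:
  assumes "inner_partition mu" "skew_shape mu = {}" "i < length lam"
  shows "mu i = lam ! i"
proof (rule ccontr)
  assume "mu i \<noteq> lam ! i"
  then have "(Suc i, lam ! i) \<in> skew_shape mu"
    using inner_partition_le[OF assms(1,3)] assms(3) by simp
  then show False
    using assms(2) by simp
qed

section \<open>The Newton determinant of a skew shape and its Pieri rule\<close>

abbreviation (input) beta :: "(nat \<Rightarrow> nat) \<Rightarrow> nat \<Rightarrow> nat" where
  "beta mu j \<equiv> mu j + length lam - 1 - j"

definition skew_det :: "(nat \<Rightarrow> 'a::comm_ring_1) \<Rightarrow> (nat \<Rightarrow> nat) \<Rightarrow> 'a" where
  "skew_det a mu = det (mat (length lam) (length lam) (\<lambda>(i, j). newton a (a (beta (nth lam) i)) (beta mu j)))"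

lemma skew_det_cong:
  assumes "\<And>j. j < length lam \<Longrightarrow> mu j = nu j"
  shows "skew_det a mu = skew_det a nu"
  unfolding skew_det_def using assms by (intro arg_cong[where f = det] mat_cong) auto

lemma skew_det_add_box_not_addable:
  assumes mu: "inner_partition mu" and j: "j < length lam" "j \<notin> addable_rows mu"
  shows "skew_det a (add_box mu j) = 0"
proof (cases "0 < j \<and> mu j = mu (j - 1)")
  case True
  then obtain j' where j': "j = Suc j'" "mu j' = mu j"
    by (cases j) auto
  then have "beta (add_box mu j) j' = beta (add_box mu j) j"
    using j(1) by simp
  then have entry: "newton a (a (beta (nth lam) i)) (beta (add_box mu j) j') =
      newton a (a (beta (nth lam) i)) (beta (add_box mu j) j)" for i
    by (simp only:)
  show ?thesis
    unfolding skew_det_def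
  proof (rule det_mat_identical_cols[of j' _ j])
    show "j' < length lam" "j < length lam" "j' \<noteq> j"
      using j' j(1) by simp_all
  qed (rule entry)
next
  case False
  have "j = 0 \<or> mu j < mu (j - 1)"
    using False inner_partition_antimono[OF mu, of "j - 1" j] j(1) by auto
  then have "mu j = lam ! j"
    using j inner_partition_le[OF mu j(1)] by (auto simp: addable_rows_def)
  show ?thesis
    unfolding skew_det_def
  proof (rule det_mat_zero_block[OF j(1)])
    fix i k
    assume ik: "j \<le> i" "i < length lam" "k \<le> j"
    have "lam ! i \<le> mu j" "mu j \<le> mu k"
      using ik \<open>mu j = lam ! j\<close> parts_antimono[of j i] inner_partition_antimono[OF mu, of k j] j(1)
      by simp_all
    then have "beta (nth lam) i < beta (add_box mu j) k"
      using ik by (cases "k = j") auto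
    then show "newton a (a (beta (nth lam) i)) (beta (add_box mu j) k) = 0"
      by (rule newton_node_eq_0)
  qed
qed

text \<open>Multiplying column \<open>j\<close> entrywise by the nodes \<open>a (beta lam i)\<close> of the rows raises the
  degree of its Newton products by one, up to a multiple of the old column.\<close>

lemma skew_det_scale_col:
  assumes j: "j < length lam"
  shows "det (mat (length lam) (length lam) (\<lambda>(i, k). if k = j
      then a (beta (nth lam) i) * newton a (a (beta (nth lam) i)) (beta mu k)
      else newton a (a (beta (nth lam) i)) (beta mu k))) =
    skew_det a (add_box mu j) + a (beta mu j) * skew_det a mu"
proof -
  let ?n = "length lam"
  let ?f = "\<lambda>i k. newton a (a (beta (nth lam) i)) (beta mu k)"
  let ?u = "\<lambda>i. newton a (a (beta (nth lam) i)) (beta (add_box mu j) j)"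
  have "beta (add_box mu j) j = Suc (beta mu j)"
    using j by simp
  then have u: "?u i = ?f i j * (a (beta (nth lam) i) - a (beta mu j))" for i
    by (simp only: newton_Suc)
  have col_u: "mat ?n ?n (\<lambda>(i, k). if k = j then ?u i else ?f i k) =
      mat ?n ?n (\<lambda>(i, k). newton a (a (beta (nth lam) i)) (beta (add_box mu j) k))"
    by (intro mat_cong) auto
  have col_f: "mat ?n ?n (\<lambda>(i, k). if k = j then ?f i j else ?f i k) = mat ?n ?n (\<lambda>(i, k). ?f i k)"
    by (intro mat_cong) auto
  have "det (mat ?n ?n (\<lambda>(i, k). if k = j then a (beta (nth lam) i) * ?f i k else ?f i k)) =
      det (mat ?n ?n (\<lambda>(i, k). if k = j then ?u i + a (beta mu j) * ?f i j else ?f i k))"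
    unfolding u by (intro arg_cong[where f = det] mat_cong) (simp add: algebra_simps)
  also have "\<dots> = det (mat ?n ?n (\<lambda>(i, k). if k = j then ?u i else ?f i k)) +
      a (beta mu j) * det (mat ?n ?n (\<lambda>(i, k). if k = j then ?f i j else ?f i k))"
    by (rule det_mat_add_col[OF j])
  also have "\<dots> = skew_det a (add_box mu j) + a (beta mu j) * skew_det a mu"
    by (simp only: col_u col_f skew_det_def)
  finally show ?thesis .
qed

lemma skew_det_pieri:
  assumes mu: "inner_partition mu"
  shows "((\<Sum>i<length lam. a (beta (nth lam) i)) - (\<Sum>j<length lam. a (beta mu j))) * skew_det a mu =
    (\<Sum>r\<in>addable_rows mu. skew_det a (add_box mu r))"
proof -
  have "(\<Sum>i<length lam. a (beta (nth lam) i)) * skew_det a mu =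
      (\<Sum>j<length lam. det (mat (length lam) (length lam) (\<lambda>(i, k). if k = j
        then a (beta (nth lam) i) * newton a (a (beta (nth lam) i)) (beta mu k)
        else newton a (a (beta (nth lam) i)) (beta mu k))))"
    unfolding skew_det_def by (rule sum_det_mat_scale_col[symmetric])
  also have "\<dots> = (\<Sum>j<length lam. skew_det a (add_box mu j) + a (beta mu j) * skew_det a mu)"
    by (intro sum.cong refl skew_det_scale_col) simp
  also have "\<dots> = (\<Sum>j<length lam. skew_det a (add_box mu j)) + (\<Sum>j<length lam. a (beta mu j)) * skew_det a mu"
    by (simp add: sum.distrib sum_distrib_right)
  also have "\<dots> = (\<Sum>r\<in>addable_rows mu. skew_det a (add_box mu r)) + (\<Sum>j<length lam. a (beta mu j)) * skew_det a mu"
  proof -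
    have "addable_rows mu \<subseteq> {..<length lam}"
      by (auto simp: addable_rows_def)
    moreover have "skew_det a (add_box mu j) = 0" if "j \<in> {..<length lam} - addable_rows mu" for j
      using that skew_det_add_box_not_addable[OF mu] by blast
    ultimately show ?thesis
      by (subst sum.mono_neutral_right) auto
  qed
  finally show ?thesis
    by (simp add: algebra_simps)
qed

lemma skew_det_full:
  "skew_det a (nth lam) = (\<Prod>i<length lam. newton a (a (beta (nth lam) i)) (beta (nth lam) i))"
  unfolding skew_det_def
proof (rule det_mat_upper_triangular)
  fix i k
  assume "k < i" "i < length lam"
  then have "beta (nth lam) i < beta (nth lam) k"
    using parts_antimono[of k i] by simp
  then show "newton a (a (beta (nth lam) i)) (beta (nth lam) k) = 0"
    by (rule newton_node_eq_0)
qed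

lemma skew_det_0:
  "skew_det a (\<lambda>_. 0) =
    (\<Prod>i<length lam. \<Prod>k\<in>{i<..<length lam}. a (beta (nth lam) i) - a (beta (nth lam) k))"
proof -
  have "mat (length lam) (length lam) (\<lambda>(i, j). newton a (a (beta (nth lam) i)) (beta (\<lambda>_. 0) j)) =
      mat (length lam) (length lam) (\<lambda>(i, j). newton a (a (beta (nth lam) i)) (length lam - 1 - j))"
    by (intro mat_cong) simp
  then show ?thesis
    unfolding skew_det_def by (simp only: det_newton_vandermonde)
qed

section \<open>The tableau sum of a skew shape\<close>

text \<open>With the nodes \<open>diag_node x m\<close>, the sum of the weights of the diagonals \<open>- n, \<dots>, m - n\<close>,
  the difference \<open>diag_node x (beta lam r) - diag_node x (beta mu r)\<close> is the weight of row \<open>r + 1\<close>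
  of \<open>lam / mu\<close>.\<close>

definition diag_sum :: "(int \<Rightarrow> 'a::comm_ring_1) \<Rightarrow> int \<Rightarrow> 'a" where
  "diag_sum x p = (\<Sum>t\<in>{- int (length lam)..p}. x t)"

definition diag_node :: "(int \<Rightarrow> 'a::comm_ring_1) \<Rightarrow> nat \<Rightarrow> 'a" where
  "diag_node x m = diag_sum x (int m - int (length lam))"

lemma diag_sum_diff:
  assumes "- int (length lam) - 1 \<le> p" "p \<le> q"
  shows "diag_sum x q - diag_sum x p = (\<Sum>t\<in>{p<..q}. x t)"
proof -
  have "{- int (length lam)..q} = {- int (length lam)..p} \<union> {p<..q}"
    using assms by auto
  then show ?thesis
    unfolding diag_sum_def by (simp add: sum.union_disjoint ivl_disj_int)
qed

lemma diag_node_beta: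
  assumes "r < length lam"
  shows "diag_node x (beta mu r) = diag_sum x (int (mu r) - int r - 1)"
proof -
  have "int (beta mu r) - int (length lam) = int (mu r) - int r - 1"
    using assms by (simp add: of_nat_diff)
  then show ?thesis
    by (simp only: diag_node_def)
qed

lemma diag_node_diff:
  assumes "i < k" "k < length lam"
  shows "diag_node x (beta (nth lam) i) - diag_node x (beta (nth lam) k) =
    (\<Sum>t\<in>{int (lam ! k) - int k - 1<..int (lam ! i) - int i - 1}. x t)"
proof -
  have "i < length lam"
    using assms by simp
  then have "diag_node x (beta (nth lam) i) - diag_node x (beta (nth lam) k) =
      diag_sum x (int (lam ! i) - int i - 1) - diag_sum x (int (lam ! k) - int k - 1)"
    using assms(2) by (simp only: diag_node_beta)
  also have "\<dots> = (\<Sum>t\<in>{int (lam ! k) - int k - 1<..int (lam ! i) - int i - 1}. x t)"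
    using parts_antimono[of i k] assms by (intro diag_sum_diff) auto
  finally show ?thesis .
qed

lemma content_sum_skew_shape:
  assumes mu: "inner_partition mu"
  shows "(\<Sum>p\<in>skew_shape mu. x (content p)) =
    (\<Sum>i<length lam. diag_node x (beta (nth lam) i)) - (\<Sum>j<length lam. diag_node x (beta mu j))"
proof -
  have "inj_on (\<lambda>(r, c). (Suc r, c)) (SIGMA r:{..<length lam}. {mu r<..lam ! r})"
    by (rule inj_onI) auto
  then have "(\<Sum>p\<in>skew_shape mu. x (content p)) =
      (\<Sum>u\<in>(SIGMA r:{..<length lam}. {mu r<..lam ! r}). x (content ((\<lambda>(r, c). (Suc r, c)) u)))"
    unfolding skew_shape_eq_image by (rule sum.reindex[unfolded comp_def])
  also have "\<dots> = (\<Sum>(r, c)\<in>(SIGMA r:{..<length lam}. {mu r<..lam ! r}). x (int c - int (Suc r)))"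
    by (rule sum.cong) (auto simp: Defs.content_def)
  also have "\<dots> = (\<Sum>r<length lam. \<Sum>c\<in>{mu r<..lam ! r}. x (int c - int (Suc r)))"
    by (rule sum.Sigma[symmetric]) auto
  also have "\<dots> = (\<Sum>r<length lam. diag_node x (beta (nth lam) r) - diag_node x (beta mu r))"
  proof (intro sum.cong refl)
    fix r
    assume r: "r \<in> {..<length lam}"
    then have "mu r \<le> lam ! r"
      using inner_partition_le[OF mu] by simp
    have "(\<Sum>c\<in>{mu r<..lam ! r}. x (int c - int (Suc r))) =
        (\<Sum>t\<in>{int (mu r) - int (Suc r)<..int (lam ! r) - int (Suc r)}. x t)"
      by (rule sum_nat_interval_shift)
    also have "\<dots> = diag_sum x (int (lam ! r) - int r - 1) - diag_sum x (int (mu r) - int r - 1)"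
      using diag_sum_diff[of "int (mu r) - int r - 1" "int (lam ! r) - int r - 1" x] r \<open>mu r \<le> lam ! r\<close>
      by (simp add: algebra_simps)
    also have "\<dots> = diag_node x (beta (nth lam) r) - diag_node x (beta mu r)"
      using r by (simp only: diag_node_beta lessThan_iff)
    finally show "(\<Sum>c\<in>{mu r<..lam ! r}. x (int c - int (Suc r))) =
        diag_node x (beta (nth lam) r) - diag_node x (beta mu r)" .
  qed
  finally show ?thesis
    by (simp add: sum_subtractf)
qed

lemma tableau_sum_skew_shape_add_box:
  assumes "skew_shape mu \<noteq> {}"
  shows "tableau_sum (skew_shape mu) x = 1 / (\<Sum>p\<in>skew_shape mu. x (content p)) *
    (\<Sum>r\<in>addable_rows mu. tableau_sum (skew_shape (add_box mu r)) x)"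
proof -
  have inj: "inj_on (\<lambda>r. (Suc r, Suc (mu r))) (addable_rows mu)"
    by (rule inj_onI) auto
  have "(\<Sum>b\<in>inner_corners (skew_shape mu). tableau_sum (skew_shape mu - {b}) x) =
      (\<Sum>r\<in>addable_rows mu. tableau_sum (skew_shape mu - {(Suc r, Suc (mu r))}) x)"
    unfolding inner_corners_skew_shape by (rule sum.reindex[OF inj, unfolded comp_def])
  also have "\<dots> = (\<Sum>r\<in>addable_rows mu. tableau_sum (skew_shape (add_box mu r)) x)"
    by (intro sum.cong refl) (simp only: skew_shape_add_box)
  finally show ?thesis
    using tableau_sum_remove_corner[OF finite_skew_shape assms, of x] by simp
qed

lemma tableau_sum_skew_shape:
  fixes x :: "int \<Rightarrow> 'a::field"
  assumes nonzero: "\<And>nu. inner_partition nu \<Longrightarrow> skew_shape nu \<noteq> {} \<Longrightarrow> (\<Sum>p\<in>skew_shape nu. x (content p)) \<noteq> 0"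
    and "inner_partition mu"
  shows "tableau_sum (skew_shape mu) x * skew_det (diag_node x) (nth lam) = skew_det (diag_node x) mu"
  using assms(2)
proof (induction "card (skew_shape mu)" arbitrary: mu)
  case 0
  then have "skew_shape mu = {}"
    using finite_skew_shape by simp
  moreover have "skew_det (diag_node x) mu = skew_det (diag_node x) (nth lam)"
    using skew_shape_empty[OF "0.prems" \<open>skew_shape mu = {}\<close>] by (rule skew_det_cong)
  ultimately show ?case
    by simp
next
  case (Suc d)
  let ?S = "skew_shape mu" and ?D = "skew_det (diag_node x)"
  define \<sigma> where "\<sigma> = (\<Sum>p\<in>?S. x (content p))"
  have "?S \<noteq> {}"
    using Suc.hyps(2) by auto
  then have "\<sigma> \<noteq> 0"
    unfolding \<sigma>_def using nonzero Suc.prems by blast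
  have IH: "tableau_sum (skew_shape (add_box mu r)) x * ?D (nth lam) = ?D (add_box mu r)"
    if r: "r \<in> addable_rows mu" for r
  proof (rule Suc.hyps(1))
    have "(Suc r, Suc (mu r)) \<in> ?S"
      using r inner_corners_skew_shape[of mu] inner_corners_subset by blast
    then show "d = card (skew_shape (add_box mu r))"
      using Suc.hyps(2) r finite_skew_shape by (simp add: skew_shape_add_box)
    show "inner_partition (add_box mu r)"
      using Suc.prems r by (rule inner_partition_add_box)
  qed
  have "tableau_sum ?S x = 1 / \<sigma> * (\<Sum>r\<in>addable_rows mu. tableau_sum (skew_shape (add_box mu r)) x)"
    unfolding \<sigma>_def using \<open>?S \<noteq> {}\<close> by (rule tableau_sum_skew_shape_add_box)
  then have "tableau_sum ?S x * ?D (nth lam) =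
      1 / \<sigma> * (\<Sum>r\<in>addable_rows mu. tableau_sum (skew_shape (add_box mu r)) x * ?D (nth lam))"
    by (simp add: sum_distrib_right mult.assoc)
  also have "\<dots> = 1 / \<sigma> * (\<Sum>r\<in>addable_rows mu. ?D (add_box mu r))"
    by (intro arg_cong[where f = "\<lambda>s. 1 / \<sigma> * s"] sum.cong refl IH)
  also have "\<dots> = 1 / \<sigma> * (\<sigma> * ?D mu)"
    unfolding \<sigma>_def content_sum_skew_shape[OF Suc.prems] skew_det_pieri[OF Suc.prems] ..
  finally show ?case
    using \<open>\<sigma> \<noteq> 0\<close> by simp
qed

end

section \<open>Hook lengths\<close>

lemma down_closed_eq_lessThan:
  fixes A :: "nat set"
  assumes "finite A" and down: "\<And>r r'. r \<in> A \<Longrightarrow> r' \<le> r \<Longrightarrow> r' \<in> A"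
  shows "A = {..<card A}"
proof -
  have "r < card A" if "r \<in> A" for r
  proof -
    have "{..r} \<subseteq> A"
      using down that by blast
    then have "card {..r} \<le> card A"
      by (rule card_mono[OF assms(1)])
    then show ?thesis
      by simp
  qed
  then have "A \<subseteq> {..<card A}"
    by blast
  then show ?thesis
    by (intro card_subset_eq) simp_all
qed

context partition_shape
begin

definition col_length :: "nat \<Rightarrow> nat" where
  "col_length j = card {r. r < length lam \<and> j \<le> lam ! r}"

lemma le_part_iff_less_col_length:
  assumes "r < length lam"
  shows "j \<le> lam ! r \<longleftrightarrow> r < col_length j"
proof -
  let ?A = "{r. r < length lam \<and> j \<le> lam ! r}"
  have "?A = {..<card ?A}"
  proof (rule down_closed_eq_lessThan)
    fix r r'
    assume "r \<in> ?A" "r' \<le> r"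
    then show "r' \<in> ?A"
      using parts_antimono[of r' r] by auto
  qed simp
  then have "r \<in> ?A \<longleftrightarrow> r \<in> {..<card ?A}"
    by blast
  then show ?thesis
    using assms by (simp add: col_length_def)
qed

lemma col_length_le: "col_length j \<le> length lam"
  unfolding col_length_def by (rule card_mono[of "{..<length lam}", simplified]) auto

lemma col_length_antimono: "j1 \<le> j2 \<Longrightarrow> col_length j2 \<le> col_length j1"
  unfolding col_length_def by (intro card_mono) auto

lemma mem_hook:
  assumes i: "i < length lam" and j: "1 \<le> j" "j \<le> lam ! i"
  shows "(a, b) \<in> hook lam (Suc i) j \<longleftrightarrow>
    (a = Suc i \<and> j \<le> b \<and> b \<le> lam ! i) \<or> (b = j \<and> Suc i \<le> a \<and> a \<le> col_length j)"
proof -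
  have arm: "(Suc i, b) \<in> boxes lam \<longleftrightarrow> 1 \<le> b \<and> b \<le> lam ! i"
    using i by (simp add: boxes_def)
  have leg: "(a, j) \<in> boxes lam \<longleftrightarrow> 1 \<le> a \<and> a \<le> col_length j"
  proof
    assume "(a, j) \<in> boxes lam"
    then have "1 \<le> a" "a - 1 < length lam" "j \<le> lam ! (a - 1)"
      by (auto simp: boxes_def)
    then show "1 \<le> a \<and> a \<le> col_length j"
      using le_part_iff_less_col_length[of "a - 1" j] by simp
  next
    assume a: "1 \<le> a \<and> a \<le> col_length j"
    then have "a - 1 < length lam" "a - 1 < col_length j"
      using col_length_le[of j] by auto
    then have "j \<le> lam ! (a - 1)"
      using le_part_iff_less_col_length[of "a - 1" j] by simp
    then show "(a, j) \<in> boxes lam"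
      using a j \<open>a - 1 < length lam\<close> by (simp add: boxes_def)
  qed
  show ?thesis
    unfolding hook_def using arm leg j by auto
qed

lemma inj_on_content_hook:
  assumes i: "i < length lam" and j: "1 \<le> j" "j \<le> lam ! i"
  shows "inj_on content (hook lam (Suc i) j)"
proof (rule inj_onI)
  fix p q :: "nat \<times> nat"
  obtain a b a' b' where p: "p = (a, b)" and q: "q = (a', b')"
    by (cases p, cases q)
  assume "p \<in> hook lam (Suc i) j" "q \<in> hook lam (Suc i) j" "content p = content q"
  then have "(a = Suc i \<and> j \<le> b) \<or> (b = j \<and> Suc i \<le> a)"
    and "(a' = Suc i \<and> j \<le> b') \<or> (b' = j \<and> Suc i \<le> a')"
    and "int b - int a = int b' - int a'"
    unfolding p q using mem_hook[OF assms, of a b] mem_hook[OF assms, of a' b']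
    by (blast, blast, simp add: Defs.content_def)
  then have "a = a' \<and> b = b'"
    by (elim disjE conjE) auto
  then show "p = q"
    unfolding p q by simp
qed

lemma content_hook:
  assumes i: "i < length lam" and j: "1 \<le> j" "j \<le> lam ! i"
  shows "content ` hook lam (Suc i) j = {int j - int (col_length j) - 1<..int (lam ! i) - int i - 1}"
proof
  have "i < col_length j"
    using le_part_iff_less_col_length[OF i] j by simp
  note mem = mem_hook[OF assms]
  show "content ` hook lam (Suc i) j \<subseteq> {int j - int (col_length j) - 1<..int (lam ! i) - int i - 1}"
  proof
    fix t
    assume "t \<in> content ` hook lam (Suc i) j"
    then obtain a b where "(a, b) \<in> hook lam (Suc i) j" "t = int b - int a"
      by (auto simp: Defs.content_def)
    then show "t \<in> {int j - int (col_length j) - 1<..int (lam ! i) - int i - 1}"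
      using mem[of a b] \<open>i < col_length j\<close> j by auto
  qed
  show "{int j - int (col_length j) - 1<..int (lam ! i) - int i - 1} \<subseteq> content ` hook lam (Suc i) j"
  proof
    fix t
    assume t: "t \<in> {int j - int (col_length j) - 1<..int (lam ! i) - int i - 1}"
    show "t \<in> content ` hook lam (Suc i) j"
    proof (cases "int j - int i - 1 \<le> t")
      case True
      then have "(Suc i, nat (t + int i + 1)) \<in> hook lam (Suc i) j"
        using mem t by auto
      moreover have "content (Suc i, nat (t + int i + 1)) = t"
        using True j by (simp add: Defs.content_def)
      ultimately show ?thesis
        by (metis image_eqI)
    next
      case False
      then have "(nat (int j - t), j) \<in> hook lam (Suc i) j"
        using mem t by auto
      moreover have "content (nat (int j - t), j) = t"
        using False by (simp add: Defs.content_def)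
      ultimately show ?thesis
        by (metis image_eqI)
    qed
  qed
qed

lemma hook_x_eq_diag_sum:
  fixes x :: "int \<Rightarrow> 'a::field"
  assumes i: "i < length lam" and j: "1 \<le> j" "j \<le> lam ! i"
  shows "hook_x lam (Suc i) j x =
    diag_sum x (int (lam ! i) - int i - 1) - diag_sum x (int j - int (col_length j) - 1)"
proof -
  have "i < col_length j"
    using le_part_iff_less_col_length[OF i] j by simp
  have "hook_x lam (Suc i) j x = (\<Sum>t\<in>{int j - int (col_length j) - 1<..int (lam ! i) - int i - 1}. x t)"
    unfolding hook_x_def content_hook[OF assms, symmetric] by (rule sum.reindex[OF inj_on_content_hook[OF assms], unfolded comp_def, symmetric])
  also have "\<dots> = diag_sum x (int (lam ! i) - int i - 1) - diag_sum x (int j - int (col_length j) - 1)"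
    using col_length_le[of j] \<open>i < col_length j\<close> j by (intro diag_sum_diff[symmetric]) auto
  finally show ?thesis .
qed

text \<open>Frobenius' description of the first-column hook lengths: the positions \<open>- n, \<dots>, \<beta>\<^sub>i - 1\<close>
  below the shifted part \<open>\<beta>\<^sub>i = lam ! i - i - 1\<close> are the shifted parts of the lower rows and the feet
  of the hooks of row \<open>i + 1\<close>.\<close>

lemma shifted_parts_strict_antimono:
  "k1 < k2 \<Longrightarrow> k2 < length lam \<Longrightarrow> int (lam ! k2) - int k2 - 1 < int (lam ! k1) - int k1 - 1"
  using parts_antimono[of k1 k2] by simp

lemma hook_feet_strict_mono:
  "j1 < j2 \<Longrightarrow> int j1 - int (col_length j1) - 1 < int j2 - int (col_length j2) - 1"
  using col_length_antimono[of j1 j2] by simp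

lemma shifted_part_ne_hook_foot:
  assumes "k < length lam"
  shows "int (lam ! k) - int k - 1 \<noteq> int j - int (col_length j) - 1"
  using le_part_iff_less_col_length[OF assms, of j] by (cases "j \<le> lam ! k") auto

lemma inj_on_shifted_parts: "inj_on (\<lambda>k. int (lam ! k) - int k - 1) {i<..<length lam}"
proof (rule linorder_inj_onI')
  fix k1 k2
  assume "k1 \<in> {i<..<length lam}" "k2 \<in> {i<..<length lam}" "k1 < k2"
  then show "int (lam ! k1) - int k1 - 1 \<noteq> int (lam ! k2) - int k2 - 1"
    using shifted_parts_strict_antimono[of k1 k2] by simp
qed

lemma inj_on_hook_feet: "inj_on (\<lambda>j. int j - int (col_length j) - 1) A"
proof (rule linorder_inj_onI')
  fix j1 j2 :: nat
  assume "j1 < j2"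
  then show "int j1 - int (col_length j1) - 1 \<noteq> int j2 - int (col_length j2) - 1"
    using hook_feet_strict_mono[of j1 j2] by simp
qed

lemma shifted_parts_hook_feet_disjoint:
  "(\<lambda>k. int (lam ! k) - int k - 1) ` {i<..<length lam} \<inter> (\<lambda>j. int j - int (col_length j) - 1) ` A = {}"
proof -
  have "int (lam ! k) - int k - 1 \<noteq> int j - int (col_length j) - 1" if "k \<in> {i<..<length lam}" for k j
    using that by (intro shifted_part_ne_hook_foot) simp
  then show ?thesis
    by blast
qed

lemma interval_eq_shifted_parts_Un_hook_feet:
  assumes i: "i < length lam"
  shows "{- int (length lam)..<int (lam ! i) - int i - 1} =
    (\<lambda>k. int (lam ! k) - int k - 1) ` {i<..<length lam} \<union> (\<lambda>j. int j - int (col_length j) - 1) ` {1..lam ! i}"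
    (is "?I = ?A \<union> ?B")
proof -
  have card_A: "card ?A = length lam - 1 - i"
    using inj_on_shifted_parts by (simp add: card_image)
  have card_B: "card ?B = lam ! i"
    using inj_on_hook_feet by (simp add: card_image)
  have "?A \<subseteq> ?I"
  proof
    fix t
    assume "t \<in> ?A"
    then obtain k where "k \<in> {i<..<length lam}" "t = int (lam ! k) - int k - 1"
      by blast
    moreover have "lam ! k \<le> lam ! i"
      using parts_antimono[of i k] calculation(1) by simp
    ultimately show "t \<in> ?I"
      by auto
  qed
  moreover have "?B \<subseteq> ?I"
  proof
    fix t
    assume "t \<in> ?B"
    then obtain j where "j \<in> {1..lam ! i}" "t = int j - int (col_length j) - 1"
      by blast
    moreover have "i < col_length j"
      using le_part_iff_less_col_length[OF i] calculation(1) by simp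
    ultimately show "t \<in> ?I"
      using col_length_le[of j] by auto
  qed
  moreover note shifted_parts_hook_feet_disjoint[of i "{1..lam ! i}"]
  moreover have "card ?I = length lam - 1 - i + lam ! i"
    using i by simp
  ultimately show ?thesis
    using card_A card_B by (intro card_subset_eq[symmetric]) (simp_all add: card_Un_disjoint finite_subset)
qed

lemma newton_diag_node:
  assumes "i < length lam"
  shows "newton (diag_node x) y (beta mu i) =
    (\<Prod>p\<in>{- int (length lam)..<int (mu i) - int i - 1}. y - diag_sum x p)"
proof -
  have "bij_betw (\<lambda>u. int u - int (length lam)) {..<beta mu i} {- int (length lam)..<int (mu i) - int i - 1}"
  proof (rule bij_betw_imageI)
    show "inj_on (\<lambda>u. int u - int (length lam)) {..<beta mu i}"
      by (rule inj_onI) simp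
    show "(\<lambda>u. int u - int (length lam)) ` {..<beta mu i} = {- int (length lam)..<int (mu i) - int i - 1}"
    proof
      show "{- int (length lam)..<int (mu i) - int i - 1} \<subseteq> (\<lambda>u. int u - int (length lam)) ` {..<beta mu i}"
      proof
        fix t
        assume "t \<in> {- int (length lam)..<int (mu i) - int i - 1}"
        then show "t \<in> (\<lambda>u. int u - int (length lam)) ` {..<beta mu i}"
          using assms by (intro rev_image_eqI[of "nat (t + int (length lam))"]) auto
      qed
    qed (use assms in auto)
  qed
  then show ?thesis
    unfolding newton_def diag_node_def by (rule prod.reindex_bij_betw)
qed

lemma prod_hooks_boxes:
  "(\<Prod>(i, j)\<in>boxes lam. f i j) = (\<Prod>i<length lam. \<Prod>j\<in>{1..lam ! i}. f (Suc i) j)"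
proof -
  have inj: "inj_on (\<lambda>(r, c). (Suc r, c)) (SIGMA r:{..<length lam}. {0<..lam ! r})"
    by (rule inj_onI) auto
  have "(\<Prod>(i, j)\<in>boxes lam. f i j) =
      (\<Prod>u\<in>(SIGMA r:{..<length lam}. {0<..lam ! r}). (\<lambda>(i, j). f i j) ((\<lambda>(r, c). (Suc r, c)) u))"
    unfolding skew_shape_0[symmetric] skew_shape_eq_image by (rule prod.reindex[OF inj, unfolded comp_def])
  also have "\<dots> = (\<Prod>(r, c)\<in>(SIGMA r:{..<length lam}. {0<..lam ! r}). f (Suc r) c)"
    by (rule prod.cong) auto
  also have "\<dots> = (\<Prod>r<length lam. \<Prod>c\<in>{0<..lam ! r}. f (Suc r) c)"
    by (rule prod.Sigma[symmetric]) auto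
  also have "\<dots> = (\<Prod>i<length lam. \<Prod>j\<in>{1..lam ! i}. f (Suc i) j)"
  proof -
    have "{0<..lam ! r} = {1..lam ! r}" for r
      by auto
    then show ?thesis
      by (simp only:)
  qed
  finally show ?thesis .
qed

lemma newton_diag_node_hooks:
  fixes x :: "int \<Rightarrow> 'a::field"
  assumes i: "i < length lam"
  shows "newton (diag_node x) (diag_node x (beta (nth lam) i)) (beta (nth lam) i) =
    (\<Prod>k\<in>{i<..<length lam}. diag_node x (beta (nth lam) i) - diag_node x (beta (nth lam) k)) *
    (\<Prod>j\<in>{1..lam ! i}. hook_x lam (Suc i) j x)"
proof -
  let ?Y = "\<lambda>i. diag_node x (beta (nth lam) i)"
  have "finite {i<..<length lam}" "finite {1..lam ! i}"
    by simp_all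
  moreover note shifted_parts_hook_feet_disjoint[of i "{1..lam ! i}"] inj_on_shifted_parts[of i]
    inj_on_hook_feet[of "{1..lam ! i}"]
  ultimately have "newton (diag_node x) (?Y i) (beta (nth lam) i) =
      (\<Prod>k\<in>{i<..<length lam}. ?Y i - diag_sum x (int (lam ! k) - int k - 1)) *
      (\<Prod>j\<in>{1..lam ! i}. ?Y i - diag_sum x (int j - int (col_length j) - 1))"
    unfolding newton_diag_node[OF i] interval_eq_shifted_parts_Un_hook_feet[OF i]
    by (simp add: prod.union_disjoint prod.reindex)
  also have "\<dots> = (\<Prod>k\<in>{i<..<length lam}. ?Y i - ?Y k) * (\<Prod>j\<in>{1..lam ! i}. hook_x lam (Suc i) j x)"
  proof (intro arg_cong2[where f = "(*)"] prod.cong refl)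
    fix k
    assume "k \<in> {i<..<length lam}"
    then have "k < length lam"
      by simp
    then show "?Y i - diag_sum x (int (lam ! k) - int k - 1) = ?Y i - ?Y k"
      by (simp only: diag_node_beta)
  next
    fix j
    assume "j \<in> {1..lam ! i}"
    then have "1 \<le> j" "j \<le> lam ! i"
      by simp_all
    then show "?Y i - diag_sum x (int j - int (col_length j) - 1) = hook_x lam (Suc i) j x"
      by (simp only: diag_node_beta[OF i] hook_x_eq_diag_sum[OF i])
  qed
  finally show ?thesis .
qed

lemma skew_det_full_hooks:
  fixes x :: "int \<Rightarrow> 'a::field"
  shows "skew_det (diag_node x) (nth lam) =
    (\<Prod>i<length lam. \<Prod>k\<in>{i<..<length lam}. diag_node x (beta (nth lam) i) - diag_node x (beta (nth lam) k)) *
    (\<Prod>(i, j)\<in>boxes lam. hook_x lam i j x)"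
proof -
  let ?Y = "\<lambda>i. diag_node x (beta (nth lam) i)"
  have "skew_det (diag_node x) (nth lam) = (\<Prod>i<length lam. newton (diag_node x) (?Y i) (beta (nth lam) i))"
    by (rule skew_det_full)
  also have "\<dots> = (\<Prod>i<length lam. (\<Prod>k\<in>{i<..<length lam}. ?Y i - ?Y k) * (\<Prod>j\<in>{1..lam ! i}. hook_x lam (Suc i) j x))"
    using newton_diag_node_hooks by (intro prod.cong) simp_all
  also have "\<dots> = (\<Prod>i<length lam. \<Prod>k\<in>{i<..<length lam}. ?Y i - ?Y k) * (\<Prod>(i, j)\<in>boxes lam. hook_x lam i j x)"
    by (simp only: prod.distrib prod_hooks_boxes)
  finally show ?thesis .
qed

lemma finite_boxes: "finite (boxes lam)"
  using finite_skew_shape[of "\<lambda>_. 0"] by (simp add: skew_shape_0)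

lemma card_boxes: "card (boxes lam) = sum_list lam"
proof -
  have "inj_on (\<lambda>(r, c). (Suc r, c)) (SIGMA r:{..<length lam}. {0<..lam ! r})"
    by (rule inj_onI) auto
  then have "card (boxes lam) = card (SIGMA r:{..<length lam}. {0<..lam ! r})"
    unfolding skew_shape_0[symmetric] skew_shape_eq_image by (rule card_image)
  also have "\<dots> = sum_list lam"
    by (simp add: card_SigmaI sum_list_sum_nth atLeast0LessThan)
  finally show ?thesis .
qed

lemma SYT_eq_std_tableaux: "SYT lam = std_tableaux (boxes lam)"
  by (simp add: SYT_def std_tableaux_def card_boxes)

lemma T_x_eq_tableau_weight: "T_x lam x T = tableau_weight (boxes lam) x T"
  by (simp add: T_x_def tableau_weight_def card_boxes pos_def Let_def)

theorem hook_formula_generic: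
  fixes x :: "int \<Rightarrow> 'a::field"
  assumes boxes_nonzero: "\<And>S. S \<subseteq> boxes lam \<Longrightarrow> S \<noteq> {} \<Longrightarrow> (\<Sum>p\<in>S. x (content p)) \<noteq> 0"
    and intervals_nonzero: "\<And>p q. p < q \<Longrightarrow> (\<Sum>t\<in>{p<..q}. x t) \<noteq> 0"
  shows "(\<Sum>T\<in>SYT lam. T_x lam x T) = (\<Prod>(i, j)\<in>boxes lam. 1 / hook_x lam i j x)"
proof -
  let ?Y = "\<lambda>i. diag_node x (beta (nth lam) i)"
  let ?V = "\<Prod>i<length lam. \<Prod>k\<in>{i<..<length lam}. ?Y i - ?Y k"
  let ?H = "\<Prod>(i, j)\<in>boxes lam. hook_x lam i j x"
  have "?Y i - ?Y k \<noteq> 0" if "i < k" "k < length lam" for i k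
    unfolding diag_node_diff[OF that] using intervals_nonzero shifted_parts_strict_antimono[OF that] by simp
  then have "?V \<noteq> 0"
    by (simp add: prod_zero_iff)
  have "skew_shape mu \<subseteq> boxes lam" for mu
    by (auto simp: boxes_def)
  then have "tableau_sum (boxes lam) x * (?V * ?H) = ?V"
    using tableau_sum_skew_shape[OF _ inner_partition_0, of x] boxes_nonzero
    by (simp add: skew_shape_0 skew_det_full_hooks skew_det_0)
  then have "?V * (tableau_sum (boxes lam) x * ?H) = ?V * 1"
    by (simp add: ac_simps)
  then have inverse: "tableau_sum (boxes lam) x * ?H = 1"
    using \<open>?V \<noteq> 0\<close> by simp
  then have "?H \<noteq> 0"
    by (metis mult_zero_right zero_neq_one)
  then have "tableau_sum (boxes lam) x = 1 / ?H"
    using inverse by (metis nonzero_eq_divide_eq)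
  then show ?thesis
    by (simp add: SYT_eq_std_tableaux T_x_eq_tableau_weight tableau_sum_def prod_dividef case_prod_beta)
qed

end

section \<open>From generic weights to arbitrary weights\<close>

lemma sum_inverse_eq_inverse_iff:
  fixes d :: "'i \<Rightarrow> 'a::field"
  assumes "finite I" "\<And>i. i \<in> I \<Longrightarrow> d i \<noteq> 0" "e \<noteq> 0"
  shows "(\<Sum>i\<in>I. 1 / d i) = 1 / e \<longleftrightarrow> e * (\<Sum>i\<in>I. \<Prod>i'\<in>I - {i}. d i') = (\<Prod>i\<in>I. d i)"
proof -
  define P where "P = (\<Prod>i\<in>I. d i)"
  have "P \<noteq> 0"
    unfolding P_def using assms(1,2) by simp
  have "(\<Prod>i'\<in>I - {i}. d i') = P * (1 / d i)" if "i \<in> I" for i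
    unfolding P_def using assms(1,2) that by (simp add: prod.remove)
  then have "e * (\<Sum>i\<in>I. \<Prod>i'\<in>I - {i}. d i') = e * P * (\<Sum>i\<in>I. 1 / d i)"
    by (simp add: sum_distrib_left mult.assoc)
  then show ?thesis
    using \<open>P \<noteq> 0\<close> assms(3) unfolding P_def[symmetric] by (auto simp: field_simps)
qed

text \<open>Cleared of denominators, the hook length formula is a polynomial identity in the weights and
  is therefore transported along ring homomorphisms; this is how it passes from generic weights to
  arbitrary ones.\<close>

definition tableau_denominators :: "nat list \<Rightarrow> (int \<Rightarrow> 'a::comm_ring_1) \<Rightarrow> (nat \<times> nat \<Rightarrow> nat) \<Rightarrow> 'a" where
  "tableau_denominators lam y T =
    (\<Prod>k=1..sum_list lam. \<Sum>l=1..k. y (content (pos lam T (sum_list lam + 1 - l))))"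

definition hook_identity_cleared :: "nat list \<Rightarrow> (int \<Rightarrow> 'a::comm_ring_1) \<Rightarrow> bool" where
  "hook_identity_cleared lam y \<longleftrightarrow>
    (\<Prod>(i, j)\<in>boxes lam. \<Sum>c\<in>hook lam i j. y (content c)) *
      (\<Sum>T\<in>SYT lam. \<Prod>T'\<in>SYT lam - {T}. tableau_denominators lam y T') =
    (\<Prod>T\<in>SYT lam. tableau_denominators lam y T)"

lemma (in comm_ring_hom) hom_hook_identity_cleared:
  "hook_identity_cleared lam y \<Longrightarrow> hook_identity_cleared lam (hom \<circ> y)"
  unfolding hook_identity_cleared_def tableau_denominators_def
  by (drule arg_cong[where f = hom]) (simp add: hom_distribs case_prod_beta)

lemma (in inj_comm_ring_hom) hook_identity_cleared_hom_iff:
  "hook_identity_cleared lam (hom \<circ> y) \<longleftrightarrow> hook_identity_cleared lam y"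
  unfolding hook_identity_cleared_def tableau_denominators_def
  by (simp only: comp_apply case_prod_unfold hom_distribs[symmetric] eq_iff)

lemma sum_linear_poly_ne_0:
  assumes "finite A" "A \<noteq> {}"
  shows "(\<Sum>a\<in>A. [:c a, 1:] :: 'a::field_char_0 poly) \<noteq> 0"
proof
  assume "(\<Sum>a\<in>A. [:c a, 1:]) = 0"
  then have "coeff (\<Sum>a\<in>A. [:c a, 1:]) 1 = 0"
    by simp
  then show False
    using assms by (simp add: coeff_sum)
qed

context partition_shape
begin

lemma finite_SYT: "finite (SYT lam)"
  unfolding SYT_eq_std_tableaux by (rule finite_std_tableaux[OF finite_boxes])

lemma hook_formula_iff_cleared:
  fixes y :: "int \<Rightarrow> 'a::field"
  assumes denominators: "\<And>T k. T \<in> SYT lam \<Longrightarrow> 1 \<le> k \<Longrightarrow> k \<le> sum_list lam \<Longrightarrow>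
      (\<Sum>l=1..k. y (content (pos lam T (sum_list lam + 1 - l)))) \<noteq> 0"
    and hooks: "\<And>i j. (i, j) \<in> boxes lam \<Longrightarrow> hook_x lam i j y \<noteq> 0"
  shows "(\<Sum>T\<in>SYT lam. T_x lam y T) = (\<Prod>(i, j)\<in>boxes lam. 1 / hook_x lam i j y) \<longleftrightarrow>
    hook_identity_cleared lam y"
proof -
  have "T_x lam y T = 1 / tableau_denominators lam y T" for T
    by (simp add: T_x_def tableau_denominators_def prod_dividef Let_def)
  moreover have "(\<Prod>(i, j)\<in>boxes lam. 1 / hook_x lam i j y) = 1 / (\<Prod>(i, j)\<in>boxes lam. hook_x lam i j y)"
    by (simp add: prod_dividef case_prod_beta)
  moreover have "tableau_denominators lam y T \<noteq> 0" if "T \<in> SYT lam" for T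
    using denominators[OF that] by (simp add: tableau_denominators_def)
  moreover have "(\<Prod>(i, j)\<in>boxes lam. hook_x lam i j y) \<noteq> 0"
    using hooks finite_boxes by (auto simp: prod_zero_iff)
  ultimately show ?thesis
    unfolding hook_identity_cleared_def hook_x_def[symmetric]
    by (simp add: sum_inverse_eq_inverse_iff[OF finite_SYT] mult.commute)
qed

text \<open>For the weights \<open>x t + X\<close> in the field of rational functions in \<open>X\<close>, the coefficient of \<open>X\<close>
  in a sum of weights is the number of summands, so no nonempty sum vanishes.\<close>

lemma hook_identity_cleared_linear_weights:
  fixes x :: "int \<Rightarrow> 'a::field_char_0"
  shows "hook_identity_cleared lam (\<lambda>t. [:x t, 1:])"
proof -
  define X where "X = to_fract \<circ> (\<lambda>t. [:x t, 1:])"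
  have generic: "(\<Sum>a\<in>A. X (g a)) \<noteq> 0" if "finite A" "A \<noteq> {}" for A :: "'b set" and g
    unfolding X_def comp_def to_fract_sum[symmetric] to_fract_eq_0_iff
    by (rule sum_linear_poly_ne_0[OF that])
  have formula: "(\<Sum>T\<in>SYT lam. T_x lam X T) = (\<Prod>(i, j)\<in>boxes lam. 1 / hook_x lam i j X)"
  proof (rule hook_formula_generic)
    show "(\<Sum>p\<in>S. X (content p)) \<noteq> 0" if "S \<subseteq> boxes lam" "S \<noteq> {}" for S
      using that finite_boxes by (intro generic) (auto intro: finite_subset)
    show "(\<Sum>t\<in>{p<..q}. X t) \<noteq> 0" if "p < q" for p q
      using that by (intro generic[of _ "\<lambda>t. t"]) auto
  qed
  have "(\<Sum>T\<in>SYT lam. T_x lam X T) = (\<Prod>(i, j)\<in>boxes lam. 1 / hook_x lam i j X) \<longleftrightarrow>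
      hook_identity_cleared lam X"
  proof (rule hook_formula_iff_cleared)
    show "(\<Sum>l=1..k. X (content (pos lam T (sum_list lam + 1 - l)))) \<noteq> 0" if "1 \<le> k" for T k
      using that by (intro generic) auto
    show "hook_x lam i j X \<noteq> 0" if "(i, j) \<in> boxes lam" for i j
      unfolding hook_x_def using that finite_boxes by (intro generic) (auto simp: hook_def intro: finite_subset)
  qed
  then have "hook_identity_cleared lam X"
    using formula by (rule iffD1)
  then show ?thesis
    unfolding X_def by (rule iffD1[OF to_fract_hom.hook_identity_cleared_hom_iff])
qed

end

theorem theorem3p6:
  fixes lam :: "nat list" and n :: nat and x :: "int \<Rightarrow> 'a::field_char_0"
  assumes "is_partition lam n"
    and "\<And>T k. T \<in> SYT lam \<Longrightarrow> 1 \<le> k \<Longrightarrow> k \<le> n \<Longrightarrow>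
           (\<Sum>l=1..k. x (content (pos lam T (n + 1 - l)))) \<noteq> 0"
    and "\<And>i j. (i, j) \<in> boxes lam \<Longrightarrow> hook_x lam i j x \<noteq> 0"
  shows "(\<Sum>T\<in>SYT lam. T_x lam x T) = (\<Prod>(i, j)\<in>boxes lam. 1 / hook_x lam i j x)"
proof -
  interpret partition_shape lam
    using assms(1) by unfold_locales (simp add: is_partition_def)
  have "hook_identity_cleared lam ((\<lambda>p. poly p 0) \<circ> (\<lambda>t. [:x t, 1:]))"
    by (rule poly_hom.hom_hook_identity_cleared[OF hook_identity_cleared_linear_weights])
  moreover have "(\<lambda>p. poly p 0) \<circ> (\<lambda>t. [:x t, 1:]) = x"
    by (simp add: fun_eq_iff)
  moreover have "sum_list lam = n"
    using assms(1) by (simp add: is_partition_def)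
  then have "(\<Sum>T\<in>SYT lam. T_x lam x T) = (\<Prod>(i, j)\<in>boxes lam. 1 / hook_x lam i j x) \<longleftrightarrow>
      hook_identity_cleared lam x"
    using assms(2,3) by (intro hook_formula_iff_cleared) simp_all
  ultimately show ?thesis
    by simp
qed

end
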